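(* Fix $\alpha\in(0,1)$ and $\nu\in(0,\alpha)$, and let $y\sim P_\mu$. (i) (Inference on the winner.) Let $\hat\gamma=\arg\max_{\gamma\in[m]}y_\gamma$ (ties broken by any rule) and $\widehat\Gamma^+_\nu=\{\gamma\in[m]: y_\gamma\ge y_{\hat\gamma}-4q^{\nu}([m])\}$. Then $$P_\mu\left\{\mu_{\hat\gamma}\in\left(y_{\hat\gamma}\pm q^{(\alpha-\nu)}(\widehat\Gamma^+_\nu)\right)\right\}\ge1-\alpha.$$ (ii) (File-drawer problem.) For a fixed threshold $T\in\mathbb R$ let $\widehat\Gamma=\{\gamma\in[m]:y_\gamma\ge T\}$ and $\widehat\Gamma^+_\nu=\{\gamma\in[m]: y_\gamma\ge T-2q^\nu([m])\}$. Then $$P_\mu\left\{\mu_\gamma\in\left(y_\gamma\pm q^{(\alpha-\nu)}(\widehat\Gamma^+_\nu)\right),\ \forall\gamma\in\widehat\Gamma\right\}\ge1-\alpha.$$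
   Context: $\{P_\mu\}_{\mu\in\mathbb R^m}$ is a location family: $y=(y_1,\dots,y_m)\sim P_\mu$ means $y=\mu+Z$ with $Z=(Z_1,\dots,Z_m)\sim P_0$, where the $Z_i$ share a common marginal distribution that is symmetric with mean zero (the $Z_i$ need not be independent). For an index set $\mathcal I\subseteq[m]$ and $\beta\in(0,1)$, $$q^{\beta}(\mathcal I)=\inf\left\{q: P_0\left\{\max_{i\in\mathcal I}|Z_i|\le q\right\}\ge1-\beta\right\},$$ and for a data-dependent set $\widehat\Gamma^+_\nu$ the quantity $q^{(\alpha-\nu)}(\widehat\Gamma^+_\nu)$ is this function evaluated at the realized set. *)

theory Defs
  imports "HOL-Probability.Probability"
begin

text \<open>Index set [m] is the finite type 'm (m = CARD('m)); Z, y, mu are vectors real^'m.\<close>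

definition maxabs :: "'m::finite set \<Rightarrow> real^'m \<Rightarrow> real" where
  "maxabs I z = Max (insert 0 ((\<lambda>i. \<bar>z$i\<bar>) ` I))"

definition qtl :: "(real^'m::finite) measure \<Rightarrow> real \<Rightarrow> 'm set \<Rightarrow> real" where
  "qtl P0 \<beta> I = Inf {q. measure P0 {z \<in> space P0. maxabs I z \<le> q} \<ge> 1 - \<beta>}"

end

theory Submission
  imports Defs
begin

(*
  Let Q = q^\<nu>([m]). With probability at least 1 - \<nu> every |Z_i| is at most Q; on that event
  the reported indices (the winner, resp. every index above T) lie in an oracle set \<Gamma> that depends
  on \<mu> alone (near-maximal means, resp. means above T - Q), and \<Gamma> is contained in the
  data-dependent set \<Gamma>^+_\<nu>. Since q^\<beta>(I) is monotone in I, coverage then follows from the event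
  max_{i\<in>\<Gamma>} |Z_i| \<le> q^(\<alpha>-\<nu>)(\<Gamma>), which has probability at least 1 - (\<alpha> - \<nu>) because \<Gamma> is
  deterministic. A union bound gives 1 - \<alpha>.
*)

context real_distribution
begin

lemma quantile_set_nonempty:
  assumes "p < 1"
  shows "{q. p \<le> cdf M q} \<noteq> {}"
proof -
  have "eventually (\<lambda>q. p < cdf M q) at_top"
    using cdf_lim_at_top_prob assms by (rule order_tendstoD)
  then obtain q where "p < cdf M q" using eventually_happens by fastforce
  then show ?thesis by (auto intro: less_imp_le)
qed

lemma quantile_set_bdd_below:
  assumes "0 < p"
  shows "bdd_below {q. p \<le> cdf M q}"
proof -
  have "eventually (\<lambda>q. cdf M q < p) at_bot"
    using cdf_lim_at_bot assms by (rule order_tendstoD)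
  then obtain b where b: "\<And>q. q \<le> b \<Longrightarrow> cdf M q < p" by (auto simp: eventually_at_bot_linorder)
  show ?thesis
  proof (rule bdd_belowI)
    fix q assume "q \<in> {q. p \<le> cdf M q}"
    then show "b \<le> q" using b[of q] by (cases "q \<le> b") auto
  qed
qed

(* The infimum is attained because the distribution function is right continuous. *)
lemma cdf_Inf_quantile_set_ge:
  assumes "0 < p" "p < 1"
  shows "p \<le> cdf M (Inf {q. p \<le> cdf M q})"
proof -
  define x where "x = Inf {q. p \<le> cdf M q}"
  have above: "eventually (\<lambda>t. p \<le> cdf M t) (at_right x)"
  proof (rule eventually_at_rightI)
    fix t assume "t \<in> {x<..<x + 1}"
    then have "Inf {q. p \<le> cdf M q} < t" unfolding x_def by simp
    then obtain q where "p \<le> cdf M q" "q < t"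
      using cInf_less_iff[OF quantile_set_nonempty[OF \<open>p < 1\<close>] quantile_set_bdd_below[OF \<open>0 < p\<close>]]
      by auto
    then show "p \<le> cdf M t" using cdf_nondecreasing[of q t] by linarith
  qed simp
  have right_cont: "(cdf M \<longlongrightarrow> cdf M x) (at_right x)"
    using cdf_is_right_cont by (simp add: continuous_within)
  show ?thesis
    using tendsto_lowerbound[OF right_cont above trivial_limit_at_right_real] unfolding x_def .
qed

end

lemma borel_measurable_vec_component [measurable]:
  "(\<lambda>z::real^'m::finite. z $ i) \<in> borel_measurable borel"
  by (intro borel_measurable_continuous_onI continuous_intros)

lemma measurable_translate [measurable]:
  "(\<lambda>z::real^'m::finite. \<mu> + z) \<in> borel \<rightarrow>\<^sub>M borel"
  by (intro borel_measurable_continuous_onI continuous_intros)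

lemma maxabs_le_iff: "maxabs I z \<le> q \<longleftrightarrow> 0 \<le> q \<and> (\<forall>i\<in>I. \<bar>z $ i\<bar> \<le> q)"
  unfolding maxabs_def by (subst Max_le_iff) auto

lemma abs_le_maxabs: "i \<in> I \<Longrightarrow> \<bar>z $ i\<bar> \<le> maxabs I z"
  using maxabs_le_iff[of I z "maxabs I z"] by auto

lemma sets_Collect_borel_pred:
  assumes "sets M = sets (borel :: (real^'m::finite) measure)" "Measurable.pred borel P"
  shows "{z \<in> space M. P z} \<in> sets M"
  using assms sets_eq_imp_space_eq[OF assms(1)] unfolding pred_def by simp

lemma borel_measurable_maxabs:
  assumes "sets M = sets (borel :: (real^'m::finite) measure)"
  shows "maxabs I \<in> borel_measurable M"
  unfolding borel_measurable_iff_le maxabs_le_iff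
  by (intro allI sets_Collect_borel_pred[OF assms]) measurable

lemma sets_maxabs_le:
  assumes "sets M = sets (borel :: (real^'m::finite) measure)"
  shows "{z \<in> space M. maxabs I z \<le> q} \<in> sets M"
  using borel_measurable_maxabs[OF assms] unfolding borel_measurable_iff_le ..

lemma measure_maxabs_le_eq_cdf:
  assumes "sets M = sets (borel :: (real^'m::finite) measure)"
  shows "measure M {z \<in> space M. maxabs I z \<le> q} = cdf (distr M borel (maxabs I)) q"
  unfolding cdf_def using borel_measurable_maxabs[OF assms]
  by (subst measure_distr) (auto simp: vimage_def Int_def conj_commute)

lemma maxabs_mono: "I \<subseteq> J \<Longrightarrow> maxabs I z \<le> maxabs J z"
  using maxabs_le_iff[of J z "maxabs J z"] by (auto simp: maxabs_le_iff)

lemma qtl_eq_Inf_quantile_set: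
  assumes "sets M = sets (borel :: (real^'m::finite) measure)"
  shows "qtl M \<beta> I = Inf {q. 1 - \<beta> \<le> cdf (distr M borel (maxabs I)) q}"
  unfolding qtl_def measure_maxabs_le_eq_cdf[OF assms] ..

lemma measure_maxabs_le_qtl:
  fixes M :: "(real^'m::finite) measure"
  assumes "prob_space M" "sets M = sets borel" "0 < \<beta>" "\<beta> < 1"
  shows "1 - \<beta> \<le> measure M {z \<in> space M. maxabs I z \<le> qtl M \<beta> I}"
proof -
  interpret real_distribution "distr M borel (maxabs I)"
    using prob_space.real_distribution_distr[OF assms(1)] borel_measurable_maxabs[OF assms(2)]
    by simp
  show ?thesis
    unfolding measure_maxabs_le_eq_cdf[OF assms(2)] qtl_eq_Inf_quantile_set[OF assms(2)]
    using assms(3,4) by (intro cdf_Inf_quantile_set_ge) auto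
qed

lemma qtl_mono:
  fixes M :: "(real^'m::finite) measure"
  assumes "prob_space M" "sets M = sets borel" "0 < \<beta>" "\<beta> < 1" "I \<subseteq> J"
  shows "qtl M \<beta> I \<le> qtl M \<beta> J"
proof -
  interpret prob_space M by fact
  interpret I: real_distribution "distr M borel (maxabs I)"
    using borel_measurable_maxabs[OF assms(2)] by simp
  interpret J: real_distribution "distr M borel (maxabs J)"
    using borel_measurable_maxabs[OF assms(2)] by simp
  have "cdf (distr M borel (maxabs J)) q \<le> cdf (distr M borel (maxabs I)) q" for q
    unfolding measure_maxabs_le_eq_cdf[OF assms(2), symmetric]
    using maxabs_mono[OF assms(5)]
    by (intro finite_measure_mono sets_maxabs_le[OF assms(2)]) (force intro: order_trans)
  then show ?thesis
    unfolding qtl_eq_Inf_quantile_set[OF assms(2)]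
    using assms(3,4)
    by (intro cInf_superset_mono J.quantile_set_nonempty I.quantile_set_bdd_below)
      (auto intro: order_trans)
qed

lemma (in prob_space) prob_ge_of_Int_subset:
  assumes "A \<in> events" "B \<in> events" "C \<in> events" "A \<inter> B \<subseteq> C"
    and "1 - a \<le> prob A" "1 - b \<le> prob B"
  shows "1 - a - b \<le> prob C"
proof -
  have "prob (A \<union> B) = prob A + prob B - prob (A \<inter> B)"
    using assms by (intro measure_Un3) (auto simp: fmeasurable_eq_sets)
  moreover have "prob (A \<inter> B) \<le> prob C"
    using assms by (intro finite_measure_mono) auto
  ultimately show ?thesis using assms(5,6) prob_le_1[of "A \<union> B"] by linarith
qed

lemma pred_set_valued_argument:
  fixes S :: "'a \<Rightarrow> 'i::finite set"
  assumes "\<And>\<gamma>. Measurable.pred M (\<lambda>z. \<gamma> \<in> S z)" "\<And>G. Measurable.pred M (R G)"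
  shows "Measurable.pred M (\<lambda>z. R (S z) z)"
proof -
  have "(\<lambda>z. R (S z) z) = (\<lambda>z. \<exists>G\<in>UNIV. (\<forall>\<gamma>. \<gamma> \<in> G \<longleftrightarrow> \<gamma> \<in> S z) \<and> R G z)"
    by (auto simp: set_eq_iff[symmetric])
  also have "Measurable.pred M \<dots>" using assms by measurable
  finally show ?thesis .
qed

lemma measure_ge_via_oracle_set:
  fixes P0 :: "(real^'m::finite) measure"
  assumes "prob_space P0" "sets P0 = sets borel"
    and "0 < \<nu>" "\<nu> < 1" "0 < \<beta>" "\<beta> < 1"
    and "{z \<in> space P0. R z} \<in> sets P0"
    and "\<And>z. (\<forall>i. \<bar>z $ i\<bar> \<le> qtl P0 \<nu> UNIV) \<Longrightarrow> maxabs \<Gamma> z \<le> qtl P0 \<beta> \<Gamma> \<Longrightarrow> R z"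
  shows "1 - \<nu> - \<beta> \<le> measure P0 {z \<in> space P0. R z}"
proof (rule prob_space.prob_ge_of_Int_subset[OF assms(1)])
  show "{z \<in> space P0. maxabs UNIV z \<le> qtl P0 \<nu> UNIV} \<in> sets P0"
    "{z \<in> space P0. maxabs \<Gamma> z \<le> qtl P0 \<beta> \<Gamma>} \<in> sets P0"
    using assms(2) by (rule sets_maxabs_le)+
  show "1 - \<nu> \<le> measure P0 {z \<in> space P0. maxabs UNIV z \<le> qtl P0 \<nu> UNIV}"
    "1 - \<beta> \<le> measure P0 {z \<in> space P0. maxabs \<Gamma> z \<le> qtl P0 \<beta> \<Gamma>}"
    using assms(1-6) by (simp_all add: measure_maxabs_le_qtl)
qed (use assms(7,8) in \<open>auto simp: maxabs_le_iff\<close>)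

lemma winner_coverage:
  fixes P0 :: "(real^'m::finite) measure" and \<alpha> \<nu> :: real and \<mu> :: "real^'m"
    and g :: "real^'m \<Rightarrow> 'm"
  assumes "prob_space P0" "sets P0 = sets borel"
    and "0 < \<nu>" "\<nu> < \<alpha>" "\<alpha> < 1"
    and argmax: "\<forall>y j. y$j \<le> y$(g y)"
    and "g \<in> borel \<rightarrow>\<^sub>M count_space UNIV"
  shows "measure P0 {z \<in> space P0.
            let y = \<mu> + z; w = g y;
                G = {\<gamma>. y$\<gamma> \<ge> y$w - 4 * qtl P0 \<nu> UNIV}
            in \<bar>\<mu>$w - y$w\<bar> \<le> qtl P0 (\<alpha> - \<nu>) G} \<ge> 1 - \<alpha>"
proof -
  define Q where "Q = qtl P0 \<nu> UNIV"
  define q where "q = qtl P0 (\<alpha> - \<nu>)"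
  define \<Gamma> where "\<Gamma> = {\<gamma>. \<forall>j. \<mu>$\<gamma> \<ge> \<mu>$j - 2 * Q}"
  have "Measurable.pred borel (\<lambda>z. \<bar>\<mu>$w - (\<mu> + z)$w\<bar> \<le> q {\<gamma>. (\<mu> + z)$\<gamma> \<ge> (\<mu> + z)$w - 4 * Q})"
    for w by (rule pred_set_valued_argument) measurable
  moreover have "(\<lambda>z. g (\<mu> + z)) \<in> borel \<rightarrow>\<^sub>M count_space UNIV"
    using assms(7) by measurable
  ultimately have covered_pred: "Measurable.pred borel (\<lambda>z. let y = \<mu> + z; w = g y;
      G = {\<gamma>. y$\<gamma> \<ge> y$w - 4 * Q} in \<bar>\<mu>$w - y$w\<bar> \<le> q G)"
    unfolding Let_def by (rule measurable_compose_countable)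
  have "1 - \<nu> - (\<alpha> - \<nu>) \<le> measure P0 {z \<in> space P0. let y = \<mu> + z; w = g y;
      G = {\<gamma>. y$\<gamma> \<ge> y$w - 4 * Q} in \<bar>\<mu>$w - y$w\<bar> \<le> q G}"
    (is "_ \<le> measure P0 {z \<in> space P0. ?covered z}")
  proof (intro measure_ge_via_oracle_set[OF assms(1,2), where \<Gamma> = \<Gamma>]
      sets_Collect_borel_pred[OF assms(2)])
    fix z :: "real^'m"
    define y where "y = \<mu> + z"
    define w where "w = g y"
    define G where "G = {\<gamma>. y$\<gamma> \<ge> y$w - 4 * Q}"
    assume "\<forall>i. \<bar>z $ i\<bar> \<le> qtl P0 \<nu> UNIV"
    then have noise: "\<forall>i. \<bar>z $ i\<bar> \<le> Q" unfolding Q_def .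
    assume small: "maxabs \<Gamma> z \<le> qtl P0 (\<alpha> - \<nu>) \<Gamma>"
    have y_nth: "y$i = \<mu>$i + z$i" for i unfolding y_def by simp
    have "w \<in> \<Gamma>"
    proof -
      have "\<mu>$j - 2 * Q \<le> \<mu>$w" for j
        using argmax[rule_format, of y j] noise[rule_format, of j] noise[rule_format, of w]
        unfolding w_def[symmetric] by (simp add: y_nth abs_le_iff)
      then show ?thesis unfolding \<Gamma>_def by simp
    qed
    have "\<Gamma> \<subseteq> G"
    proof
      fix \<gamma> assume "\<gamma> \<in> \<Gamma>"
      then have "\<mu>$w - 2 * Q \<le> \<mu>$\<gamma>" unfolding \<Gamma>_def by simp
      then show "\<gamma> \<in> G"
        using noise[rule_format, of \<gamma>] noise[rule_format, of w]
        unfolding G_def by (simp add: y_nth abs_le_iff)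
    qed
    have "\<bar>\<mu>$w - y$w\<bar> = \<bar>z$w\<bar>" by (simp add: y_nth)
    also have "\<dots> \<le> maxabs \<Gamma> z" using \<open>w \<in> \<Gamma>\<close> by (rule abs_le_maxabs)
    also have "\<dots> \<le> q \<Gamma>" using small unfolding q_def .
    also have "\<dots> \<le> q G"
      unfolding q_def using assms(1-5) \<open>\<Gamma> \<subseteq> G\<close> by (intro qtl_mono) auto
    finally show "?covered z" by (simp add: Let_def y_def w_def G_def)
  qed (use assms covered_pred in simp_all)
  then show ?thesis unfolding Q_def q_def by simp
qed

lemma file_drawer_coverage:
  fixes P0 :: "(real^'m::finite) measure" and \<alpha> \<nu> T :: real and \<mu> :: "real^'m"
  assumes "prob_space P0" "sets P0 = sets borel"
    and "0 < \<nu>" "\<nu> < \<alpha>" "\<alpha> < 1"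
  shows "measure P0 {z \<in> space P0.
            let y = \<mu> + z;
                G = {\<gamma>. y$\<gamma> \<ge> T - 2 * qtl P0 \<nu> UNIV}
            in \<forall>\<gamma>. y$\<gamma> \<ge> T \<longrightarrow> \<bar>\<mu>$\<gamma> - y$\<gamma>\<bar> \<le> qtl P0 (\<alpha> - \<nu>) G} \<ge> 1 - \<alpha>"
proof -
  define Q where "Q = qtl P0 \<nu> UNIV"
  define q where "q = qtl P0 (\<alpha> - \<nu>)"
  define \<Gamma> where "\<Gamma> = {\<gamma>. \<mu>$\<gamma> \<ge> T - Q}"
  have covered_pred: "Measurable.pred borel (\<lambda>z. let y = \<mu> + z; G = {\<gamma>. y$\<gamma> \<ge> T - 2 * Q}
      in \<forall>\<gamma>. y$\<gamma> \<ge> T \<longrightarrow> \<bar>\<mu>$\<gamma> - y$\<gamma>\<bar> \<le> q G)"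
    unfolding Let_def by (rule pred_set_valued_argument) measurable
  have "1 - \<nu> - (\<alpha> - \<nu>) \<le> measure P0 {z \<in> space P0. let y = \<mu> + z;
      G = {\<gamma>. y$\<gamma> \<ge> T - 2 * Q} in \<forall>\<gamma>. y$\<gamma> \<ge> T \<longrightarrow> \<bar>\<mu>$\<gamma> - y$\<gamma>\<bar> \<le> q G}"
    (is "_ \<le> measure P0 {z \<in> space P0. ?covered z}")
  proof (intro measure_ge_via_oracle_set[OF assms(1,2), where \<Gamma> = \<Gamma>]
      sets_Collect_borel_pred[OF assms(2)])
    fix z :: "real^'m"
    define y where "y = \<mu> + z"
    define G where "G = {\<gamma>. y$\<gamma> \<ge> T - 2 * Q}"
    assume "\<forall>i. \<bar>z $ i\<bar> \<le> qtl P0 \<nu> UNIV"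
    then have noise: "\<forall>i. \<bar>z $ i\<bar> \<le> Q" unfolding Q_def .
    assume small: "maxabs \<Gamma> z \<le> qtl P0 (\<alpha> - \<nu>) \<Gamma>"
    have y_nth: "y$i = \<mu>$i + z$i" for i unfolding y_def by simp
    have "\<Gamma> \<subseteq> G"
    proof
      fix \<gamma> assume "\<gamma> \<in> \<Gamma>"
      then show "\<gamma> \<in> G"
        using noise[rule_format, of \<gamma>] unfolding \<Gamma>_def G_def by (simp add: y_nth abs_le_iff)
    qed
    have "\<bar>\<mu>$\<gamma> - y$\<gamma>\<bar> \<le> q G" if "y$\<gamma> \<ge> T" for \<gamma>
    proof -
      have "\<gamma> \<in> \<Gamma>"
        using that noise[rule_format, of \<gamma>] unfolding \<Gamma>_def by (simp add: y_nth abs_le_iff)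
      have "\<bar>\<mu>$\<gamma> - y$\<gamma>\<bar> = \<bar>z$\<gamma>\<bar>" by (simp add: y_nth)
      also have "\<dots> \<le> maxabs \<Gamma> z" using \<open>\<gamma> \<in> \<Gamma>\<close> by (rule abs_le_maxabs)
      also have "\<dots> \<le> q \<Gamma>" using small unfolding q_def .
      also have "\<dots> \<le> q G"
        unfolding q_def using assms \<open>\<Gamma> \<subseteq> G\<close> by (intro qtl_mono) auto
      finally show ?thesis .
    qed
    then show "?covered z" by (simp add: Let_def y_def G_def)
  qed (use assms covered_pred in simp_all)
  then show ?thesis unfolding Q_def q_def by simp
qed

theorem theorem2:
  fixes P0 :: "(real^'m::finite) measure" and \<alpha> \<nu> T :: real and \<mu> :: "real^'m"
    and g :: "real^'m \<Rightarrow> 'm"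
  assumes "prob_space P0" and "sets P0 = sets borel"
    and "\<forall>i j. distr P0 borel (\<lambda>z. z$i) = distr P0 borel (\<lambda>z. z$j)"
    and "\<forall>i. distr P0 borel (\<lambda>z. - (z$i)) = distr P0 borel (\<lambda>z. z$i)"
    and "\<forall>i. integrable P0 (\<lambda>z. z$i) \<and> (\<integral>z. z$i \<partial>P0) = 0"
    and "0 < \<alpha>" and "\<alpha> < 1" and "0 < \<nu>" and "\<nu> < \<alpha>"
    and "\<forall>y j. y$j \<le> y$(g y)"
    and "g \<in> borel \<rightarrow>\<^sub>M count_space UNIV"
  shows "measure P0 {z \<in> space P0.
            let y = \<mu> + z; w = g y;
                G = {\<gamma>. y$\<gamma> \<ge> y$w - 4 * qtl P0 \<nu> UNIV}
            in \<bar>\<mu>$w - y$w\<bar> \<le> qtl P0 (\<alpha> - \<nu>) G} \<ge> 1 - \<alpha>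
       \<and> measure P0 {z \<in> space P0.
            let y = \<mu> + z;
                G = {\<gamma>. y$\<gamma> \<ge> T - 2 * qtl P0 \<nu> UNIV}
            in \<forall>\<gamma>. y$\<gamma> \<ge> T \<longrightarrow> \<bar>\<mu>$\<gamma> - y$\<gamma>\<bar> \<le> qtl P0 (\<alpha> - \<nu>) G} \<ge> 1 - \<alpha>"
  using winner_coverage[OF assms(1,2,8,9,7,10,11)] file_drawer_coverage[OF assms(1,2,8,9,7)]
  by (rule conjI)

end
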